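(* Let $p\ge3$ be an integer, $\mu\in[0,1)$, $\xi_\mu(t)=\mu t^2+(1-\mu)t^p$, and suppose $y_\mu$ satisfies $\frac{\xi_\mu''(1)}{\xi_\mu'(1)}\le y_\mu\le\frac{\xi_\mu'(1)}{\xi_\mu''(0)}$. Then the equation $h_\mu(t)=0$ has at most two solutions $t\in(0,1)$.
   Context: $y_\mu$ is the unique $y\in(1,\infty)$ with $\frac{\xi_\mu(1)}{\xi_\mu'(1)}=\frac1{y-1}\big(\frac y{y-1}\log y-1\big)$; if $\xi_\mu''(0)=0$ the upper bound is $+\infty$. Let $m_\mu,c_\mu>0$ be the unique solution of $\xi_\mu(1)=\frac1m\big(\frac1m\log\frac{c+m}c-\frac1{c+m}\big)$, $\frac1{\xi_\mu'(1)}=c(c+m)$, let $\phi_\mu(t)=c_\mu+m_\mu(1-t)$, and $h_\mu=\phi_\mu^{-2}-\xi_\mu''$. *)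

theory Defs
  imports Complex_Main
begin

definition xi :: "real \<Rightarrow> nat \<Rightarrow> real \<Rightarrow> real" where
  "xi \<mu> p t = \<mu> * t^2 + (1 - \<mu>) * t^p"

definition xi1 :: "real \<Rightarrow> nat \<Rightarrow> real \<Rightarrow> real" where
  "xi1 \<mu> p t = 2 * \<mu> * t + (1 - \<mu>) * real p * t^(p - 1)"

definition xi2 :: "real \<Rightarrow> nat \<Rightarrow> real \<Rightarrow> real" where
  "xi2 \<mu> p t = 2 * \<mu> + (1 - \<mu>) * real p * (real p - 1) * t^(p - 2)"

definition phi :: "real \<Rightarrow> real \<Rightarrow> real \<Rightarrow> real" where
  "phi c m t = c + m * (1 - t)"

definition hfun :: "real \<Rightarrow> nat \<Rightarrow> real \<Rightarrow> real \<Rightarrow> real \<Rightarrow> real" where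
  "hfun \<mu> p c m t = 1 / (phi c m t)^2 - xi2 \<mu> p t"

end

theory Submission
  imports Defs
begin

text \<open>
  On \<open>(0,1)\<close> the equation \<open>h\<^sub>\<mu>(t) = 0\<close> reads \<open>P(t) = 0\<close> with
  \<open>P(t) = (a - m t)\<^sup>2 (A + K t\<^sup>q) - 1\<close>, where \<open>a = c + m\<close>, \<open>A = 2\<mu>\<close>,
  \<open>K > 0\<close> and \<open>q = p - 2\<close>. Since \<open>P' = (a - m t) Q\<close> with \<open>a - m t > 0\<close>,
  three zeros of \<open>P\<close> give two zeros of \<open>Q\<close> and hence a zero \<open>r\<close> of \<open>Q'\<close>;
  but \<open>Q'(t)\<close> is \<open>t\<^sup>q\<^sup>-\<^sup>2\<close> times a decreasing linear function, so
  \<open>Q' > 0\<close> on \<open>(0,r)\<close>. Thus \<open>Q < 0\<close> before its first zero, \<open>P\<close> decreases up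
  to its first zero, and this contradicts \<open>P(0) \<le> 0\<close>.
  The condition \<open>P(0) \<le> 0\<close>, i.e. \<open>2\<mu> (c + m)\<^sup>2 \<le> 1\<close>, is exactly the upper
  bound on \<open>y\<^sub>\<mu>\<close>, once the calibration identities are seen to force
  \<open>y\<^sub>\<mu> = (c + m)/c\<close>.
\<close>

lemma finite_card_le_2_if_no_increasing_triple:
  fixes S :: "'a::linorder set"
  assumes "\<And>x y z. x \<in> S \<Longrightarrow> y \<in> S \<Longrightarrow> z \<in> S \<Longrightarrow> x < y \<Longrightarrow> y < z \<Longrightarrow> False"
  shows "finite S \<and> card S \<le> 2"
proof (rule ccontr)
  assume "\<not> (finite S \<and> card S \<le> 2)"
  then obtain B where B: "B \<subseteq> S" "card B = 3"
    by (metis infinite_arbitrarily_large obtain_subset_with_card_n not_less_eq_eq numeral_3_eq_3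
        numeral_2_eq_2)
  then obtain x y z where "B = {x, y, z}" "x \<noteq> y" "y \<noteq> z" "x \<noteq> z"
    using card_3_iff by metis
  with B assms show False
    by (metis insert_subset linorder_neqE)
qed

lemma Rolle_real_deriv:
  fixes f f' :: "real \<Rightarrow> real"
  assumes "x < y" "f x = f y" "\<And>t. (f has_real_derivative f' t) (at t)"
  obtains z where "x < z" "z < y" "f' z = 0"
  using MVT2[OF assms(1), of f f'] assms by auto

lemma less_if_DERIV_pos_on_open:
  fixes f f' :: "real \<Rightarrow> real"
  assumes "a < b" "\<And>t. (f has_real_derivative f' t) (at t)"
    and "\<And>t. a < t \<Longrightarrow> t < b \<Longrightarrow> f' t > 0"
  shows "f a < f b"
  using assms
  by (intro DERIV_pos_imp_increasing_open[of a b f] DERIV_atLeastAtMost_imp_continuous_on) blast+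

lemma less_if_DERIV_neg_on_open:
  fixes f f' :: "real \<Rightarrow> real"
  assumes "a < b" "\<And>t. (f has_real_derivative f' t) (at t)"
    and "\<And>t. a < t \<Longrightarrow> t < b \<Longrightarrow> f' t < 0"
  shows "f b < f a"
  using assms
  by (intro DERIV_neg_imp_decreasing_open[of a b f] DERIV_atLeastAtMost_imp_continuous_on) blast+

lemma power_combination_pos_before_root:
  fixes K a m r t :: real and q :: nat
  assumes "q \<ge> 1" "K > 0" "m > 0" "0 < t" "t < r"
    and "(a - m*r) * (K * q * (q - 1) * r^(q - 2)) - 3*m * (K * q * r^(q - 1)) = 0"
  shows "(a - m*t) * (K * q * (q - 1) * t^(q - 2)) - 3*m * (K * q * t^(q - 1)) > 0"
proof (cases "q = 1")
  case True
  with assms show ?thesis by simp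
next
  case False
  then have q2: "q \<ge> 2" using assms(1) by simp
  define L where "L x = real (q - 1) * (a - m*x) - 3*m*x" for x
  have factored: "(a - m*x) * (K * q * (q - 1) * x^(q - 2)) - 3*m * (K * q * x^(q - 1))
      = K * q * x^(q - 2) * L x" for x
  proof -
    have "x^(q - 1) = x^(q - 2) * x"
      using q2 by (metis One_nat_def Suc_diff_Suc Suc_1 less_le_trans lessI power_Suc2)
    then show ?thesis unfolding L_def using q2 by (simp add: algebra_simps)
  qed
  have "K * q * r^(q - 2) * L r = 0" using assms(6) by (simp only: factored)
  then have "L r = 0" using assms(2,4,5) q2 by simp
  moreover have "L t - L r = (real (q - 1) * m + 3*m) * (r - t)"
    unfolding L_def by (simp add: algebra_simps)
  moreover have "(real (q - 1) * m + 3*m) * (r - t) > 0"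
    using assms(3,5) by (intro mult_pos_pos add_nonneg_pos) auto
  ultimately have "L t > 0" by linarith
  then show ?thesis using factored[of t] assms(2,4) q2 by simp
qed

lemma no_three_roots_in_unit_interval:
  fixes A K a m :: real and q :: nat
  assumes "q \<ge> 1" "A \<ge> 0" "K > 0" "0 < m" "m < a" "a^2 * A \<le> 1"
    and "0 < t1" "t1 < t2" "t2 < t3" "t3 < 1"
    and roots: "\<And>t. t \<in> {t1, t2, t3} \<Longrightarrow> (a - m*t)^2 * (A + K*t^q) = 1"
  shows False
proof -
  define u where "u t = A + K*t^q" for t :: real
  define u1 where "u1 t = K * q * t^(q - 1)" for t :: real
  define u2 where "u2 t = K * q * (q - 1) * t^(q - 2)" for t :: real
  define P where "P t = (a - m*t)^2 * u t - 1" for t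
  define Q where "Q t = (a - m*t) * u1 t - 2*m * u t" for t
  define Q' where "Q' t = (a - m*t) * u2 t - 3*m * u1 t" for t
  have dP: "(P has_real_derivative (a - m*t) * Q t) (at t)" for t
    unfolding P_def Q_def u_def u1_def
    by (auto intro!: derivative_eq_intros simp: power2_eq_square algebra_simps)
  have dQ: "(Q has_real_derivative Q' t) (at t)" for t
    unfolding Q'_def Q_def u_def u1_def u2_def
    by (auto intro!: derivative_eq_intros simp: algebra_simps diff_diff_add numeral_2_eq_2)
  have weight_pos: "a - m*t > 0" if "t < 1" for t
    using assms(4,5) that by (smt (verit) mult_less_cancel_left2)
  have Q_root_between: "\<exists>s. x < s \<and> s < y \<and> Q s = 0"
    if "x < y" "y < 1" "P x = 0" "P y = 0" for x y
    using Rolle_real_deriv[of x y P, OF _ _ dP] weight_pos that by (smt (verit) mult_eq_0_iff)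
  have P_roots: "P t1 = 0" "P t2 = 0" "P t3 = 0"
    using roots unfolding P_def u_def by auto
  obtain s1 s2 where s: "t1 < s1" "s1 < t2" "t2 < s2" "s2 < t3" "Q s1 = 0" "Q s2 = 0"
    using Q_root_between[OF assms(8) _ P_roots(1,2)] Q_root_between[OF assms(9) _ P_roots(2,3)]
      assms(9,10) by (metis order.strict_trans)
  then obtain r where r: "s1 < r" "Q' r = 0"
    using Rolle_real_deriv[of s1 s2 Q, OF _ _ dQ] by (metis order.strict_trans)
  have Q'_pos: "Q' t > 0" if "0 < t" "t < r" for t
    using power_combination_pos_before_root[OF assms(1,3,4) that] r(2)
    unfolding Q'_def u1_def u2_def by simp
  have Q_neg: "Q t < 0" if "0 \<le> t" "t < s1" for t
    using less_if_DERIV_pos_on_open[OF that(2) dQ] Q'_pos r(1) that(1) s(5) by force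
  have "(a - m*t) * Q t < 0" if "0 < t" "t < t1" for t
  proof -
    have "t < 1" "t < s1" using that s assms(9,10) by linarith+
    then show ?thesis using weight_pos[of t] Q_neg[of t] that(1) by (simp add: mult_pos_neg)
  qed
  then have "P t1 < P 0"
    using less_if_DERIV_neg_on_open[OF assms(7) dP] by blast
  moreover have "P 0 \<le> 0"
    unfolding P_def u_def using assms(1,6) by (simp add: power2_eq_square zero_power)
  ultimately show False using P_roots(1) by simp
qed

lemma roots_in_unit_interval_finite_card_le_2:
  fixes A K a m :: real and q :: nat
  assumes "q \<ge> 1" "A \<ge> 0" "K > 0" "0 < m" "m < a" "a^2 * A \<le> 1"
  defines "S \<equiv> {t \<in> {0<..<1}. (a - m*t)^2 * (A + K*t^q) = 1}"
  shows "finite S \<and> card S \<le> 2"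
proof (rule finite_card_le_2_if_no_increasing_triple)
  fix t1 t2 t3 assume "t1 \<in> S" "t2 \<in> S" "t3 \<in> S" "t1 < t2" "t2 < t3"
  then show False
    using no_three_roots_in_unit_interval[OF assms(1-6), of t1 t2 t3] unfolding S_def by auto
qed

lemma hfun_eq_0_iff:
  assumes "c > 0" "m > 0" "t < 1"
  shows "hfun \<mu> p c m t = 0 \<longleftrightarrow>
    (c + m - m*t)^2 * (2 * \<mu> + (1 - \<mu>) * real p * (real p - 1) * t^(p - 2)) = 1"
proof -
  have "phi c m t > 0"
    unfolding phi_def using assms by (intro add_pos_pos mult_pos_pos) simp_all
  then have "hfun \<mu> p c m t = 0 \<longleftrightarrow> (phi c m t)^2 * xi2 \<mu> p t = 1"
    unfolding hfun_def by (auto simp: field_simps)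
  also have "phi c m t = c + m - m*t" by (simp add: phi_def algebra_simps)
  finally show ?thesis by (simp only: xi2_def)
qed

lemma calibration_quotient_eq:
  fixes m c L :: real
  assumes "m > 0" "c > 0"
  shows "(1 / m) * ((1 / m) * L - 1 / (c + m)) * (c * (c + m))
    = (1 / ((c + m) / c - 1)) * ((c + m) / c / ((c + m) / c - 1) * L - 1)"
proof -
  have "c + m \<noteq> 0" using assms by simp
  then have "(1 / m) * ((1 / m) * L - 1 / (c + m)) * (c * (c + m)) = c * (c + m) * L / m^2 - c / m"
    using assms by (simp add: divide_simps power2_eq_square) (simp add: algebra_simps)
  moreover have "(c + m) / c - 1 = m / c" "(c + m) / c / (m / c) = (c + m) / m"
    using assms by (simp_all add: field_simps)
  moreover have "(1 / (m / c)) * ((c + m) / m * L - 1) = c * (c + m) * L / m^2 - c / m"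
    using assms by (simp add: field_simps power2_eq_square)
  ultimately show ?thesis by simp
qed

lemma y_eq_of_calibration:
  fixes X Y m c y :: real
  assumes "m > 0" "c > 0"
    and "\<And>z. z > 1 \<Longrightarrow> X / Y = (1 / (z - 1)) * (z / (z - 1) * ln z - 1) \<Longrightarrow> z = y"
    and "X = (1 / m) * ((1 / m) * ln ((c + m) / c) - 1 / (c + m))" "1 / Y = c * (c + m)"
  shows "y = (c + m) / c"
proof (rule assms(3)[symmetric])
  show "(c + m) / c > 1" using assms(1,2) by simp
  have "X / Y = X * (1 / Y)" by simp
  then show "X / Y = (1 / ((c + m) / c - 1))
      * ((c + m) / c / ((c + m) / c - 1) * ln ((c + m) / c) - 1)"
    unfolding assms(4,5) using calibration_quotient_eq[OF assms(1,2)] by simp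
qed

lemma sq_mul_two_mu_le_one:
  assumes "p \<ge> 3" "\<mu> \<ge> 0" "c > 0" "m > 0" "1 / xi1 \<mu> p 1 = c * (c + m)"
    and "xi2 \<mu> p 0 \<noteq> 0 \<Longrightarrow> (c + m) / c \<le> xi1 \<mu> p 1 / xi2 \<mu> p 0"
  shows "(c + m)^2 * (2 * \<mu>) \<le> 1"
proof (cases "\<mu> = 0")
  case False
  have D: "c * (c + m) * (2 * \<mu>) > 0" using assms(2-4) False by simp
  have "xi1 \<mu> p 1 = 1 / (c * (c + m))"
    using assms(5) by (metis inverse_eq_divide inverse_inverse_eq)
  then have "(c + m) / c \<le> 1 / (c * (c + m) * (2 * \<mu>))"
    using assms(1,6) False by (simp add: xi2_def zero_power)
  then have "(c + m) / c * (c * (c + m) * (2 * \<mu>)) \<le> 1" by (simp add: pos_le_divide_eq[OF D])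
  then show ?thesis using assms(3) by (simp add: power2_eq_square)
qed simp

theorem lemma5p7:
  fixes p :: nat and \<mu> y m c :: real
  assumes hp: "p \<ge> 3"
    and hmu: "0 \<le> \<mu>" "\<mu> < 1"
    and hy: "y > 1"
    and hy_def: "xi \<mu> p 1 / xi1 \<mu> p 1 = (1 / (y - 1)) * (y / (y - 1) * ln y - 1)"
    and hy_uniq: "\<And>z. z > 1 \<Longrightarrow> xi \<mu> p 1 / xi1 \<mu> p 1 = (1 / (z - 1)) * (z / (z - 1) * ln z - 1) \<Longrightarrow> z = y"
    and hm: "m > 0" and hc: "c > 0"
    and hmc1: "xi \<mu> p 1 = (1 / m) * ((1 / m) * ln ((c + m) / c) - 1 / (c + m))"
    and hmc2: "1 / xi1 \<mu> p 1 = c * (c + m)"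
    and hmc_uniq: "\<And>m' c'. m' > 0 \<Longrightarrow> c' > 0 \<Longrightarrow>
        xi \<mu> p 1 = (1 / m') * ((1 / m') * ln ((c' + m') / c') - 1 / (c' + m')) \<Longrightarrow>
        1 / xi1 \<mu> p 1 = c' * (c' + m') \<Longrightarrow> m' = m \<and> c' = c"
    and hlow: "xi2 \<mu> p 1 / xi1 \<mu> p 1 \<le> y"
    and hup: "xi2 \<mu> p 0 \<noteq> 0 \<Longrightarrow> y \<le> xi1 \<mu> p 1 / xi2 \<mu> p 0"
  shows "finite {t \<in> {0<..<1}. hfun \<mu> p c m t = 0} \<and> card {t \<in> {0<..<1}. hfun \<mu> p c m t = 0} \<le> 2"
proof -
  define K where "K = (1 - \<mu>) * real p * (real p - 1)"
  have "y = (c + m) / c" using y_eq_of_calibration[OF hm hc hy_uniq hmc1 hmc2] .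
  then have "(c + m)^2 * (2 * \<mu>) \<le> 1"
    using sq_mul_two_mu_le_one[OF hp hmu(1) hc hm hmc2] hup by simp
  moreover have "{t \<in> {0<..<1}. hfun \<mu> p c m t = 0}
      = {t \<in> {0<..<1}. (c + m - m*t)^2 * (2 * \<mu> + K * t^(p - 2)) = 1}"
    using hfun_eq_0_iff[OF hc hm] by (auto simp: K_def mult.assoc)
  ultimately show ?thesis
    using roots_in_unit_interval_finite_card_le_2[of "p - 2" "2 * \<mu>" K m "c + m"] hp hmu hm hc
    by (simp add: K_def)
qed

end
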